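(* Let $E\subseteq\mathbb{R}$, let $f:E\to\mathbb{R}$ be Abel continuous on $E$, and let $F\subseteq E$ be Abel sequentially compact. Then $f(F)$ is Abel sequentially compact.
   Context: A sequence $(p_n)_{n\ge0}$ is Abel convergent to $\ell$ if $\sum_{k=0}^{\infty}p_k x^k$ converges for every $0\le x<1$ and $\lim_{x\to 1^-}(1-x)\sum_{k=0}^{\infty}p_k x^k=\ell$. $f$ is Abel continuous on $E$ if for every sequence $(p_n)$ in $E$ Abel convergent to some $\ell\in E$, $(f(p_n))$ is Abel convergent to $f(\ell)$. A subset $F\subseteq\mathbb{R}$ is Abel sequentially compact if every sequence of points of $F$ has a subsequence $(r_k)$ that is Abel convergent to a limit belonging to $F$. *)

theory Defs
  imports "HOL-Analysis.Analysis"
begin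

definition abel_convergent :: "(nat \<Rightarrow> real) \<Rightarrow> real \<Rightarrow> bool" where
  "abel_convergent p l \<longleftrightarrow>
     (\<forall>x. 0 \<le> x \<and> x < 1 \<longrightarrow> summable (\<lambda>k. p k * x ^ k)) \<and>
     ((\<lambda>x. (1 - x) * (\<Sum>k. p k * x ^ k)) \<longlongrightarrow> l) (at_left 1)"

definition abel_continuous_on :: "real set \<Rightarrow> (real \<Rightarrow> real) \<Rightarrow> bool" where
  "abel_continuous_on E f \<longleftrightarrow>
     (\<forall>(p::nat \<Rightarrow> real) l. (\<forall>n. p n \<in> E) \<and> l \<in> E \<and> abel_convergent p l
        \<longrightarrow> abel_convergent (\<lambda>n. f (p n)) (f l))"

definition abel_seq_compact :: "real set \<Rightarrow> bool" where
  "abel_seq_compact F \<longleftrightarrow>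
     (\<forall>p::nat \<Rightarrow> real. (\<forall>n. p n \<in> F) \<longrightarrow>
        (\<exists>(r::nat \<Rightarrow> nat) l. strict_mono r \<and> l \<in> F \<and> abel_convergent (p \<circ> r) l))"

end

theory Submission
  imports Defs
begin

text \<open>A sequence in \<open>f ` F\<close> lifts to a sequence in \<open>F\<close>; an Abel convergent subsequence of the
  lift is carried by \<open>f\<close> onto an Abel convergent subsequence of the original sequence.\<close>

lemma abel_continuous_onD:
  fixes p :: "nat \<Rightarrow> real"
  assumes "abel_continuous_on E f" "\<And>n. p n \<in> E" "l \<in> E" "abel_convergent p l"
  shows "abel_convergent (\<lambda>n. f (p n)) (f l)"
  using assms unfolding abel_continuous_on_def by blast

lemma abel_seq_compactE:
  fixes p :: "nat \<Rightarrow> real"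
  assumes "abel_seq_compact F" "\<And>n. p n \<in> F"
  obtains r l where "strict_mono r" "l \<in> F" "abel_convergent (p \<circ> r) l"
  using assms unfolding abel_seq_compact_def by blast

theorem theorem11:
  fixes E F :: "real set" and f :: "real \<Rightarrow> real"
  assumes "abel_continuous_on E f"
    and "F \<subseteq> E"
    and "abel_seq_compact F"
  shows "abel_seq_compact (f ` F)"
  unfolding abel_seq_compact_def
proof (intro allI impI)
  fix q :: "nat \<Rightarrow> real"
  assume "\<forall>n. q n \<in> f ` F"
  then have "\<forall>n. \<exists>x. x \<in> F \<and> q n = f x"
    by blast
  then obtain p where p: "\<And>n. p n \<in> F" and q_eq: "\<And>n. q n = f (p n)"
    by metis
  obtain r l where r: "strict_mono r" and l: "l \<in> F" and conv: "abel_convergent (p \<circ> r) l"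
    using abel_seq_compactE[OF assms(3) p] .
  have "abel_convergent (\<lambda>n. f ((p \<circ> r) n)) (f l)"
    using assms(2) p l by (intro abel_continuous_onD[OF assms(1) _ _ conv]) auto
  moreover have "(\<lambda>n. f ((p \<circ> r) n)) = q \<circ> r"
    by (simp add: q_eq fun_eq_iff)
  ultimately have "abel_convergent (q \<circ> r) (f l)"
    by simp
  with r l show "\<exists>r l. strict_mono r \<and> l \<in> f ` F \<and> abel_convergent (q \<circ> r) l"
    by blast
qed

end
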